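(* Let $S,T$ be numerical semigroups such that $\mathrm H_S(x^w)f(x)=\mathrm H_T(x)$ for some integer $w\ge1$ and some polynomial $f$ with nonnegative integer coefficients. Put $Q(x)=\mathrm P_T(x)/\mathrm P_S(x^w)$. Then $Q(0)=1$, $Q(x)$ is a monic polynomial, and its nonzero coefficients alternate between $1$ and $-1$.
   Context: A numerical semigroup is a submonoid $S$ of $(\mathbb N,+)$ with finite complement in $\mathbb N$. $\mathrm H_S(x)=\sum_{s\in S}x^s$ and $\mathrm P_S(x)=(1-x)\mathrm H_S(x)$. *)

theory Defs
  imports "HOL-Computational_Algebra.Computational_Algebra"
begin

definition numerical_semigroup :: "nat set \<Rightarrow> bool" where
  "numerical_semigroup S \<longleftrightarrow> 0 \<in> S \<and> (\<forall>a\<in>S. \<forall>b\<in>S. a + b \<in> S) \<and> finite (UNIV - S)"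

definition hilbert_series :: "nat set \<Rightarrow> int fps" where
  "hilbert_series S = Abs_fps (\<lambda>n. if n \<in> S then 1 else 0)"

definition semigroup_poly :: "nat set \<Rightarrow> int fps" where
  "semigroup_poly S = (1 - fps_X) * hilbert_series S"

end

theory Submission
  imports Defs
begin

text \<open>
  Let G = f / (1 - x^w), with coefficients g_n = \<Sum>_k f_(n - wk), so that Q = (1 - x) G.
  Coefficientwise H_T = H_S(x^w) f \<le> H_\<nat>(x^w) f = G; conversely, since S contains every k \<ge> c,
  g_n is at most the coefficient of x^(n + wc) in H_T, hence at most 1. Thus G is a 0/1 series
  that starts with 1 and is eventually 1, and the coefficients of Q are its jumps: they are
  \<plusminus>1, alternate in sign, and the first and the last are +1.
\<close>

lemma fps_compose_X_power_nth:
  fixes b :: "'a::comm_ring_1 fps"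
  assumes "w > 0"
  shows "(b oo fps_X ^ w) $ i = (if w dvd i then b $ (i div w) else 0)"
proof -
  have "(b oo fps_X ^ w) $ i = (\<Sum>k=0..i. if k = i div w \<and> w dvd i then b $ k else 0)"
    unfolding fps_compose_nth power_mult[symmetric]
    by (intro sum.cong) (use assms in auto)
  also have "\<dots> = (if w dvd i then b $ (i div w) else 0)"
    by simp
  finally show ?thesis .
qed

lemma fps_compose_X_power_mult_nth:
  fixes a b :: "'a::comm_ring_1 fps"
  assumes "w > 0"
  shows "((b oo fps_X ^ w) * a) $ n = (\<Sum>k\<le>n div w. b $ k * a $ (n - w * k))"
proof -
  have multiples: "{i\<in>{0..n}. w dvd i} = (\<lambda>k. w * k) ` {..n div w}"
  proof (intro equalityI subsetI)
    fix i assume "i \<in> {i\<in>{0..n}. w dvd i}"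
    then obtain k where "i = w * k" "w * k \<le> n" by auto
    then show "i \<in> (\<lambda>k. w * k) ` {..n div w}"
      using assms by (auto simp: less_eq_div_iff_mult_less_eq mult.commute)
  next
    fix i assume "i \<in> (\<lambda>k. w * k) ` {..n div w}"
    then obtain k where "i = w * k" "k \<le> n div w" by auto
    then show "i \<in> {i\<in>{0..n}. w dvd i}"
      using assms by (auto simp: less_eq_div_iff_mult_less_eq mult.commute)
  qed
  have "((b oo fps_X ^ w) * a) $ n = (\<Sum>i=0..n. if w dvd i then b $ (i div w) * a $ (n - i) else 0)"
    unfolding fps_mult_nth fps_compose_X_power_nth[OF assms] by (intro sum.cong) auto
  also have "\<dots> = (\<Sum>i\<in>{i\<in>{0..n}. w dvd i}. b $ (i div w) * a $ (n - i))"
    by (rule sum.inter_filter[symmetric]) simp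
  also have "\<dots> = (\<Sum>k\<le>n div w. b $ k * a $ (n - w * k))"
    unfolding multiples using assms by (subst sum.reindex) (auto simp: inj_on_def)
  finally show ?thesis .
qed

lemma fps_one_minus_X_mult_nth:
  fixes G :: "'a::comm_ring_1 fps"
  shows "((1 - fps_X) * G) $ n = G $ n - (if n = 0 then 0 else G $ (n - 1))"
  by (simp add: algebra_simps)

lemma coeff_fps_of_poly_one_minus_X_mult:
  fixes G :: "'a::comm_ring_1 fps"
  assumes "fps_of_poly Q = (1 - fps_X) * G"
  shows "coeff Q n = G $ n - (if n = 0 then 0 else G $ (n - 1))"
  using fps_one_minus_X_mult_nth[of G n] by (simp flip: assms)

lemma fps_of_poly_truncate_one_minus_X_mult:
  fixes G :: "'a::comm_ring_1 fps"
  assumes "\<And>n. c \<le> n \<Longrightarrow> G $ n = G $ c"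
  shows "fps_of_poly (truncate_fps (Suc c) ((1 - fps_X) * G)) = (1 - fps_X) * G"
proof (rule fps_ext)
  fix n
  have "((1 - fps_X) * G) $ n = 0" if "Suc c \<le> n"
    using that assms[of n] assms[of "n - 1"] by (simp add: fps_one_minus_X_mult_nth)
  then show "fps_of_poly (truncate_fps (Suc c) ((1 - fps_X) * G)) $ n = ((1 - fps_X) * G) $ n"
    by simp
qed

lemma fps_nth_eq_if_one_minus_X_mult_vanishes:
  fixes G :: "'a::comm_ring_1 fps"
  assumes "i \<le> j" and "\<And>k. i < k \<Longrightarrow> k \<le> j \<Longrightarrow> ((1 - fps_X) * G) $ k = 0"
  shows "G $ j = G $ i"
  using assms
proof (induction j rule: dec_induct)
  case (step j)
  then show ?case
    using step.prems[of "Suc j"] by (simp add: fps_one_minus_X_mult_nth)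
qed simp

definition alternating_unit_coeffs :: "int poly \<Rightarrow> bool" where
  "alternating_unit_coeffs Q \<longleftrightarrow>
     (\<forall>i. coeff Q i \<noteq> 0 \<longrightarrow> coeff Q i = 1 \<or> coeff Q i = -1)
     \<and> (\<forall>i j. i < j \<longrightarrow> coeff Q i \<noteq> 0 \<longrightarrow> coeff Q j \<noteq> 0 \<longrightarrow>
          (\<forall>k. i < k \<and> k < j \<longrightarrow> coeff Q k = 0) \<longrightarrow> coeff Q j = - coeff Q i)"

lemma alternating_unit_coeffs_one_minus_X_mult:
  fixes G :: "int fps" and Q :: "int poly"
  assumes Q: "fps_of_poly Q = (1 - fps_X) * G" and zero_one: "\<And>n. G $ n = 0 \<or> G $ n = 1"
  shows "alternating_unit_coeffs Q"
proof -
  have coeff_Q_nth: "((1 - fps_X) * G) $ n = coeff Q n" for n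
    by (simp flip: Q)
  note coeff_Q = coeff_fps_of_poly_one_minus_X_mult[OF Q]
  have unit: "coeff Q i = 1 \<or> coeff Q i = -1" if "coeff Q i \<noteq> 0" for i
    using that zero_one[of i] zero_one[of "i - 1"] by (auto simp: coeff_Q)
  have alternate: "coeff Q j = - coeff Q i"
    if "i < j" "coeff Q i \<noteq> 0" "coeff Q j \<noteq> 0" "\<forall>k. i < k \<and> k < j \<longrightarrow> coeff Q k = 0" for i j
  proof -
    have "G $ (j - 1) = G $ i"
      using that(1,4) by (intro fps_nth_eq_if_one_minus_X_mult_vanishes) (auto simp: coeff_Q_nth)
    then show ?thesis
      using that(1-3) zero_one[of i] zero_one[of j] zero_one[of "i - 1"] by (auto simp: coeff_Q)
  qed
  show ?thesis
    unfolding alternating_unit_coeffs_def using unit alternate by blast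
qed

lemma lead_coeff_one_minus_X_mult_eventually_one:
  fixes G :: "int fps" and Q :: "int poly"
  assumes Q: "fps_of_poly Q = (1 - fps_X) * G"
    and zero_one: "\<And>n. G $ n = 0 \<or> G $ n = 1" and G0: "G $ 0 = 1"
    and eventually_one: "\<And>n. c \<le> n \<Longrightarrow> G $ n = 1"
  shows "lead_coeff Q = 1"
proof -
  have coeff_Q_nth: "((1 - fps_X) * G) $ n = coeff Q n" for n
    by (simp flip: Q)
  note coeff_Q = coeff_fps_of_poly_one_minus_X_mult[OF Q]
  have "G $ (degree Q + c) = G $ (degree Q)"
    by (intro fps_nth_eq_if_one_minus_X_mult_vanishes) (auto simp: coeff_Q_nth coeff_eq_0)
  then have "G $ (degree Q) = 1"
    using eventually_one[of "degree Q + c"] by simp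
  moreover have "Q \<noteq> 0"
    using coeff_Q[of 0] G0 by auto
  then have "lead_coeff Q \<noteq> 0"
    by simp
  ultimately show ?thesis
    using zero_one[of "degree Q - 1"] by (auto simp: coeff_Q)
qed

lemma numerical_semigroup_cofinite:
  assumes "numerical_semigroup S"
  obtains c where "\<And>m. c \<le> m \<Longrightarrow> m \<in> S"
proof -
  have "finite (UNIV - S)"
    using assms by (simp add: numerical_semigroup_def)
  then obtain c where "UNIV - S \<subseteq> {..<c}"
    using finite_nat_bounded by blast
  then show thesis
    by (intro that) (auto simp: not_less[symmetric])
qed

lemma hilbert_series_nth: "hilbert_series S $ n = (if n \<in> S then 1 else 0)"
  by (simp add: hilbert_series_def)

lemma hilbert_series_UNIV_times_one_minus_X: "hilbert_series UNIV * (1 - fps_X) = 1"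
  unfolding mult.commute[of _ "1 - fps_X"]
  by (rule fps_ext) (simp add: fps_one_minus_X_mult_nth hilbert_series_nth)

lemma hilbert_series_compose_mult_mono:
  fixes a :: "int fps"
  assumes "S \<subseteq> S'" and "w > 0" and "\<And>n. 0 \<le> a $ n"
  shows "((hilbert_series S oo fps_X ^ w) * a) $ n \<le> ((hilbert_series S' oo fps_X ^ w) * a) $ n"
  unfolding fps_compose_X_power_mult_nth[OF \<open>w > 0\<close>] hilbert_series_nth
  using assms by (intro sum_mono) auto

lemma hilbert_series_compose_mult_le_shift:
  fixes a :: "int fps"
  assumes "\<And>m. c \<le> m \<Longrightarrow> m \<in> S" and "w > 0" and "\<And>n. 0 \<le> a $ n"
  shows "((hilbert_series UNIV oo fps_X ^ w) * a) $ n
           \<le> ((hilbert_series S oo fps_X ^ w) * a) $ (n + w * c)"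
proof -
  have "((hilbert_series UNIV oo fps_X ^ w) * a) $ n = (\<Sum>k\<le>n div w. a $ (n - w * k))"
    using assms by (simp add: fps_compose_X_power_mult_nth hilbert_series_nth)
  also have "\<dots> = (\<Sum>k\<le>n div w. hilbert_series S $ (k + c) * a $ (n + w * c - w * (k + c)))"
    using assms(1) by (intro sum.cong) (auto simp: hilbert_series_nth distrib_left)
  also have "\<dots> = (\<Sum>k\<in>{c..n div w + c}. hilbert_series S $ k * a $ (n + w * c - w * k))"
    using sum.shift_bounds_cl_nat_ivl[of "\<lambda>k. hilbert_series S $ k * a $ (n + w * c - w * k)" 0 c]
    by (simp add: atLeast0AtMost)
  also have "\<dots> \<le> (\<Sum>k\<le>(n + w * c) div w. hilbert_series S $ k * a $ (n + w * c - w * k))"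
    using assms by (intro sum_mono2) (auto simp: hilbert_series_nth)
  also have "\<dots> = ((hilbert_series S oo fps_X ^ w) * a) $ (n + w * c)"
    using assms by (simp add: fps_compose_X_power_mult_nth)
  finally show ?thesis .
qed

lemma hilbert_series_quotient_bounds:
  fixes a :: "int fps"
  assumes "numerical_semigroup S" and w: "w > 0" and a_nonneg: "\<And>n. 0 \<le> a $ n"
    and HT: "(hilbert_series S oo fps_X ^ w) * a = hilbert_series T"
  shows "hilbert_series T $ n \<le> ((hilbert_series UNIV oo fps_X ^ w) * a) $ n
           \<and> ((hilbert_series UNIV oo fps_X ^ w) * a) $ n \<le> 1"
proof
  show "hilbert_series T $ n \<le> ((hilbert_series UNIV oo fps_X ^ w) * a) $ n"
    unfolding HT[symmetric] using w a_nonneg by (rule hilbert_series_compose_mult_mono[OF subset_UNIV])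
  obtain c where c: "\<And>m. c \<le> m \<Longrightarrow> m \<in> S"
    using numerical_semigroup_cofinite[OF assms(1)] by blast
  show "((hilbert_series UNIV oo fps_X ^ w) * a) $ n \<le> 1"
    using hilbert_series_compose_mult_le_shift[where c = c and n = n, OF c w a_nonneg]
    unfolding HT by (simp add: hilbert_series_nth split: if_splits)
qed

lemma semigroup_poly_compose_X_power:
  assumes "w > 0"
  shows "semigroup_poly S oo fps_X ^ w = (1 - fps_X ^ w) * (hilbert_series S oo fps_X ^ w)"
  using assms by (simp add: semigroup_poly_def fps_compose_mult_distrib fps_compose_sub_distrib)

lemma hilbert_series_UNIV_compose_X_power_inverse:
  assumes "w > 0"
  shows "(hilbert_series UNIV oo fps_X ^ w) * (1 - fps_X ^ w) = 1"
  using semigroup_poly_compose_X_power[OF assms, of UNIV] hilbert_series_UNIV_times_one_minus_X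
  by (simp add: semigroup_poly_def mult.commute)

lemma semigroup_poly_quotient_mult:
  fixes a :: "int fps"
  assumes w: "w > 0" and HT: "(hilbert_series S oo fps_X ^ w) * a = hilbert_series T"
  shows "(1 - fps_X) * ((hilbert_series UNIV oo fps_X ^ w) * a) * (semigroup_poly S oo fps_X ^ w)
           = semigroup_poly T"
proof -
  have "(1 - fps_X) * ((hilbert_series UNIV oo fps_X ^ w) * a) * (semigroup_poly S oo fps_X ^ w)
          = (1 - fps_X) * ((hilbert_series UNIV oo fps_X ^ w) * (1 - fps_X ^ w))
              * ((hilbert_series S oo fps_X ^ w) * a)"
    unfolding semigroup_poly_compose_X_power[OF w] by (simp only: ac_simps)
  also have "\<dots> = semigroup_poly T"
    unfolding hilbert_series_UNIV_compose_X_power_inverse[OF w] HT semigroup_poly_def by simp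
  finally show ?thesis .
qed

theorem theorem5:
  fixes S T :: "nat set" and w :: nat and f :: "int poly"
  assumes "numerical_semigroup S" and "numerical_semigroup T"
    and "w \<ge> 1"
    and "\<forall>i. coeff f i \<ge> 0"
    and "fps_compose (hilbert_series S) (fps_X ^ w) * fps_of_poly f = hilbert_series T"
  shows "\<exists>Q :: int poly.
           fps_of_poly Q * fps_compose (semigroup_poly S) (fps_X ^ w) = semigroup_poly T
         \<and> poly Q 0 = 1
         \<and> lead_coeff Q = 1
         \<and> (\<forall>i. coeff Q i \<noteq> 0 \<longrightarrow> coeff Q i = 1 \<or> coeff Q i = -1)
         \<and> (\<forall>i j. i < j \<longrightarrow> coeff Q i \<noteq> 0 \<longrightarrow> coeff Q j \<noteq> 0 \<longrightarrow>
                 (\<forall>k. i < k \<and> k < j \<longrightarrow> coeff Q k = 0) \<longrightarrow> coeff Q j = - coeff Q i)"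
proof -
  have w: "w > 0"
    using assms(3) by simp
  have f_nonneg: "\<And>n. 0 \<le> fps_of_poly f $ n"
    using assms(4) by simp
  define G where "G = (hilbert_series UNIV oo fps_X ^ w) * fps_of_poly f"
  note G_bounds = hilbert_series_quotient_bounds[OF assms(1) w f_nonneg assms(5), folded G_def]
  have G_zero_one: "G $ n = 0 \<or> G $ n = 1" for n
    using G_bounds[of n] order_trans[of 0 "hilbert_series T $ n" "G $ n"]
    by (cases "n \<in> T") (auto simp: hilbert_series_nth)
  have G_T: "G $ n = 1" if "n \<in> T" for n
    using G_bounds[of n] that by (simp add: hilbert_series_nth)
  obtain c where "\<And>m. c \<le> m \<Longrightarrow> m \<in> T"
    using numerical_semigroup_cofinite[OF assms(2)] by blast
  with G_T have G_eventually_one: "\<And>n. c \<le> n \<Longrightarrow> G $ n = 1"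
    by blast
  have G0: "G $ 0 = 1"
    using assms(2) G_T by (simp add: numerical_semigroup_def)
  define Q where "Q = truncate_fps (Suc c) ((1 - fps_X) * G)"
  have Q: "fps_of_poly Q = (1 - fps_X) * G"
    unfolding Q_def using G_eventually_one by (intro fps_of_poly_truncate_one_minus_X_mult) auto
  have "fps_of_poly Q * (semigroup_poly S oo fps_X ^ w) = semigroup_poly T"
    unfolding Q G_def by (rule semigroup_poly_quotient_mult[OF w assms(5)])
  moreover have "poly Q 0 = 1"
    by (simp add: poly_0_coeff_0 coeff_fps_of_poly_one_minus_X_mult[OF Q] G0)
  moreover note lead_coeff_one_minus_X_mult_eventually_one[OF Q G_zero_one G0 G_eventually_one]
    alternating_unit_coeffs_one_minus_X_mult[OF Q G_zero_one]
  ultimately have "\<exists>Q. fps_of_poly Q * (semigroup_poly S oo fps_X ^ w) = semigroup_poly T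
          \<and> poly Q 0 = 1 \<and> lead_coeff Q = 1 \<and> alternating_unit_coeffs Q"
    by (intro exI[of _ Q] conjI)
  then show ?thesis
    unfolding alternating_unit_coeffs_def conj_assoc .
qed

end
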